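(* Let $H$ be a subgroup of a direct product $H_1\times\dots\times H_r$ of finite groups, and let $g\in H$ be an involution. For $i=1,\dots,r$ let $L_i$ be the projection of $H$ to $H_i\times H_{i+1}\times\dots\times H_r$ (so $L_1=H$), and let $g_i$ be the image of $g$ in $L_i$. For $i=1,\dots,r-1$ let $\psi_i:L_i\to L_{i+1}$ be the canonical projection and $T_i=\ker\psi_i$; set $T_r=L_r$. Suppose that there is $k\leq r$ such that $|T_i|$ is odd for all $i<k$ and $|T_k|$ is even; if $k<r$ suppose further that $g_{k+1}=1$. Let $P$ be a Sylow $2$-subgroup of $T_k$. Then $$|H:C_H(g)|=\left(\prod_{i=1}^{k}|T_i:C_{T_i}(g_i)|\right)\frac{|(g_k)^{L_k}\cap P|}{|(g_k)^{T_k}\cap P|}.$$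
   Context: $x^K$ denotes the set of $K$-conjugates of $x$; $C_{T_i}(g_i)$ is the centralizer in the normal subgroup $T_i\trianglelefteq L_i$ of $g_i\in L_i$. *)

theory Defs
  imports "HOL-Algebra.Algebra"
begin

text \<open>Elements of the direct product H_1 x ... x H_r are extensional functions on {1..r}.
  The product of the factors H_i, ..., H_r is product_group {i..r} Hs.\<close>

definition proj_to :: "nat \<Rightarrow> nat \<Rightarrow> (nat \<Rightarrow> 'a) \<Rightarrow> (nat \<Rightarrow> 'a)" where
  "proj_to i r x = restrict x {i..r}"

definition Lproj :: "(nat \<Rightarrow> 'a) set \<Rightarrow> nat \<Rightarrow> nat \<Rightarrow> (nat \<Rightarrow> 'a) set" where
  "Lproj H r i = proj_to i r ` H"

definition Tker :: "(nat \<Rightarrow> ('a,'b) monoid_scheme) \<Rightarrow> (nat \<Rightarrow> 'a) set \<Rightarrow> nat \<Rightarrow> nat \<Rightarrow> (nat \<Rightarrow> 'a) set" where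
  "Tker Hs H r i = (if i < r then
      {x \<in> Lproj H r i. proj_to (i+1) r x = \<one>\<^bsub>product_group {i+1..r} Hs\<^esub>}
    else Lproj H r i)"

definition centr :: "('c,'d) monoid_scheme \<Rightarrow> 'c set \<Rightarrow> 'c \<Rightarrow> 'c set" where
  "centr G K g = {x \<in> K. x \<otimes>\<^bsub>G\<^esub> g = g \<otimes>\<^bsub>G\<^esub> x}"

definition conjs :: "('c,'d) monoid_scheme \<Rightarrow> 'c set \<Rightarrow> 'c \<Rightarrow> 'c set" where
  "conjs G K g = {x \<otimes>\<^bsub>G\<^esub> g \<otimes>\<^bsub>G\<^esub> inv\<^bsub>G\<^esub> x | x. x \<in> K}"

definition is_sylow :: "('c,'d) monoid_scheme \<Rightarrow> nat \<Rightarrow> 'c set \<Rightarrow> 'c set \<Rightarrow> bool" where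
  "is_sylow G p K P \<longleftrightarrow> subgroup P G \<and> P \<subseteq> K \<and> card P = p ^ multiplicity p (card K)"

end

theory Submission
  imports Defs
begin

text \<open>
  By the orbit-stabiliser theorem every index |K : C_K(x)| is the size |x^K| of
  the K-class of x, so the claim reads
    |g_1^(L_1)| = (prod_(i=1..k) |g_i^(T_i)|) * |g_k^(L_k) \<inter> P| / |g_k^(T_k) \<inter> P|,
  which follows by telescoping from two identities:
  (1) for i < k (|T_i| odd): |g_i^(L_i)| = |g_i^(T_i)| * |g_(i+1)^(L_(i+1))|.  All fibres of the
      projection g_i^(L_i) \<rightarrow> g_(i+1)^(L_(i+1)) are conjugate, and the fibre through g_i is
      g_i^(T_i), since two involutions differing by an element of the odd-order group T_i are
      conjugate under T_i;
  (2) at level k (where g_k \<in> T_k): |g_k^(L_k)| * |g_k^(T_k) \<inter> P| = |g_k^(T_k)| * |g_k^(L_k) \<inter> P|,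
      by counting the elements of L_k conjugating g_k into P coset by coset of T_k with the help
      of the Frattini argument; moreover g_k^(T_k) meets P by Sylow's conjugacy theorem.
\<close>

lemma card_eq_card_image_mult:
  assumes "finite S" and "\<And>z. z \<in> f ` S \<Longrightarrow> card {x\<in>S. f x = z} = c"
  shows "card S = card (f ` S) * c"
proof -
  have "card S = card (\<Union>z\<in>f ` S. {x\<in>S. f x = z})"
    by (rule arg_cong[where f = card]) auto
  also have "\<dots> = (\<Sum>z\<in>f ` S. card {x\<in>S. f x = z})"
    by (rule card_UN_disjoint) (use assms in auto)
  also have "\<dots> = card (f ` S) * c"
    using assms(2) by simp
  finally show ?thesis .
qed

context group
begin

lemma inv_mult_cancel_left [simp]: "\<lbrakk>x \<in> carrier G; y \<in> carrier G\<rbrakk> \<Longrightarrow> inv x \<otimes> (x \<otimes> y) = y"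
  and mult_inv_cancel_left [simp]: "\<lbrakk>x \<in> carrier G; y \<in> carrier G\<rbrakk> \<Longrightarrow> x \<otimes> (inv x \<otimes> y) = y"
  by (simp_all flip: m_assoc)

lemma conj_mult:
  "\<lbrakk>x \<in> carrier G; y \<in> carrier G; g \<in> carrier G\<rbrakk> \<Longrightarrow>
   (x \<otimes> y) \<otimes> g \<otimes> inv (x \<otimes> y) = x \<otimes> (y \<otimes> g \<otimes> inv y) \<otimes> inv x"
  by (simp add: m_assoc inv_mult_group)

lemma conj_commuting:
  "\<lbrakk>c \<in> carrier G; g \<in> carrier G; c \<otimes> g = g \<otimes> c\<rbrakk> \<Longrightarrow> c \<otimes> g \<otimes> inv c = g"
  by (metis inv_solve_right m_closed)

lemma conj_eq_iff_centralises:
  assumes "x \<in> carrier G" "y \<in> carrier G" "g \<in> carrier G"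
  shows "x \<otimes> g \<otimes> inv x = y \<otimes> g \<otimes> inv y \<longleftrightarrow> (inv y \<otimes> x) \<otimes> g = g \<otimes> (inv y \<otimes> x)"
proof -
  have "x \<otimes> g \<otimes> inv x = y \<otimes> g \<otimes> inv y \<longleftrightarrow>
        inv y \<otimes> (x \<otimes> g \<otimes> inv x) \<otimes> x = inv y \<otimes> (y \<otimes> g \<otimes> inv y) \<otimes> x"
    using assms by (metis inv_closed l_cancel m_closed r_cancel)
  moreover have "inv y \<otimes> (y \<otimes> g \<otimes> inv y) \<otimes> x = g \<otimes> (inv y \<otimes> x)"
    using assms by (simp add: m_assoc flip: m_assoc[of "inv y" y])
  moreover have "inv y \<otimes> (x \<otimes> g \<otimes> inv x) \<otimes> x = (inv y \<otimes> x) \<otimes> g"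
    using assms by (simp add: m_assoc)
  ultimately show ?thesis by simp
qed

text \<open>Refined orbit-stabiliser count: the elements of K conjugating g into a set Y are
  exactly |g^K \<inter> Y| left cosets of the centraliser C_K(g).\<close>
lemma card_conj_preimage:
  assumes K: "subgroup K G" "finite K" and g: "g \<in> carrier G"
  shows "card {x\<in>K. x \<otimes> g \<otimes> inv x \<in> Y} = card (conjs G K g \<inter> Y) * card (centr G K g)"
proof -
  interpret K: subgroup K G by (rule K(1))
  let ?f = "\<lambda>x. x \<otimes> g \<otimes> inv x"
  let ?S = "{x\<in>K. ?f x \<in> Y}"
  have "card ?S = card (?f ` ?S) * card (centr G K g)"
  proof (rule card_eq_card_image_mult)
    show "finite ?S" using K(2) by simp
    fix z assume "z \<in> ?f ` ?S"
    then obtain y where y: "y \<in> K" "?f y \<in> Y" "z = ?f y" by auto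
    have "bij_betw (\<lambda>c. y \<otimes> c) (centr G K g) {x\<in>?S. ?f x = z}"
    proof (rule bij_betw_byWitness[where f' = "\<lambda>x. inv y \<otimes> x"])
      show "\<forall>c\<in>centr G K g. inv y \<otimes> (y \<otimes> c) = c"
        using y unfolding centr_def by auto
      show "\<forall>x\<in>{x \<in> ?S. ?f x = z}. y \<otimes> (inv y \<otimes> x) = x"
        using y by auto
      show "(\<lambda>c. y \<otimes> c) ` centr G K g \<subseteq> {x \<in> ?S. ?f x = z}"
      proof
        fix w assume "w \<in> (\<lambda>c. y \<otimes> c) ` centr G K g"
        then obtain c where c: "c \<in> K" "c \<otimes> g = g \<otimes> c" and w: "w = y \<otimes> c"
          unfolding centr_def by auto
        have "?f (y \<otimes> c) = y \<otimes> (c \<otimes> g \<otimes> inv c) \<otimes> inv y"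
          using c y g by (simp add: conj_mult)
        also have "\<dots> = z"
          using conj_commuting[of c g] c y g by (simp add: subgroup.mem_carrier[OF K(1)])
        finally show "w \<in> {x \<in> ?S. ?f x = z}"
          using c y w by simp
      qed
      show "(\<lambda>x. inv y \<otimes> x) ` {x \<in> ?S. ?f x = z} \<subseteq> centr G K g"
        using y g by (auto simp: centr_def conj_eq_iff_centralises)
    qed
    then show "card {x\<in>?S. ?f x = z} = card (centr G K g)"
      by (simp add: bij_betw_same_card)
  qed
  moreover have "?f ` ?S = conjs G K g \<inter> Y" unfolding conjs_def by auto
  ultimately show ?thesis by simp
qed

lemma card_conjs_centr:
  assumes "subgroup K G" "finite K" "g \<in> carrier G"
  shows "card K = card (conjs G K g) * card (centr G K g)"
  using card_conj_preimage[OF assms, of UNIV] by simp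

lemma card_centr_pos:
  assumes "subgroup K G" "finite K" "g \<in> carrier G"
  shows "card (centr G K g) > 0"
proof -
  have "\<one> \<in> centr G K g"
    unfolding centr_def using subgroup.one_closed[OF assms(1)] assms(3) by simp
  moreover have "finite (centr G K g)" using assms(2) unfolding centr_def by simp
  ultimately show ?thesis by (auto simp: card_gt_0_iff)
qed

lemma index_centr_eq_card_conjs:
  assumes "subgroup K G" "finite K" "g \<in> carrier G"
  shows "real (card K) / real (card (centr G K g)) = real (card (conjs G K g))"
  using card_conjs_centr[OF assms] card_centr_pos[OF assms] by simp

lemma invol_cancel:
  "\<lbrakk>g \<in> carrier G; g \<otimes> g = \<one>; w \<in> carrier G\<rbrakk> \<Longrightarrow> g \<otimes> (g \<otimes> w) = w"
  by (metis m_assoc l_one)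

lemma invol_conj_pow:
  assumes "g \<in> carrier G" "g \<otimes> g = \<one>" "a \<in> carrier G"
  shows "g \<otimes> a [^] (n::nat) \<otimes> g = (g \<otimes> a \<otimes> g) [^] n"
proof (induction n)
  case 0 then show ?case using assms by simp
next
  case (Suc n)
  have "g \<otimes> a [^] Suc n \<otimes> g = (g \<otimes> a [^] n \<otimes> g) \<otimes> (g \<otimes> a \<otimes> g)"
    using assms by (simp add: m_assoc invol_cancel)
  then show ?case using Suc by simp
qed

lemma subgroup_nat_pow_closed:
  "\<lbrakk>subgroup T G; t \<in> T\<rbrakk> \<Longrightarrow> t [^] (n::nat) \<in> T"
  by (induction n) (auto simp: subgroup.one_closed subgroup.m_closed)

lemma subgroup_pow_card_eq_one:
  assumes "subgroup T G" "finite T" "t \<in> T"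
  shows "t [^] card T = \<one>"
proof -
  interpret T: group "G\<lparr>carrier := T\<rparr>" by (rule subgroup.subgroup_is_group[OF assms(1) is_group])
  have "t [^]\<^bsub>G\<lparr>carrier := T\<rparr>\<^esub> order (G\<lparr>carrier := T\<rparr>) = \<one>\<^bsub>G\<lparr>carrier := T\<rparr>\<^esub>"
    using assms T.pow_order_eq_1 by simp
  then show ?thesis by (simp add: order_def nat_pow_consistent[symmetric])
qed

text \<open>In a subgroup T of odd order, any two involutions g and g t (t \<in> T) are T-conjugate:
  with |T| = 2j+1 and s = t^j one has s g s\<inverse> = g t.\<close>
lemma invol_conj_in_odd_subgroup:
  assumes T: "subgroup T G" "finite T" "odd (card T)"
    and g: "g \<in> carrier G" "g \<otimes> g = \<one>" and t: "t \<in> T"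
    and gt: "(g \<otimes> t) \<otimes> (g \<otimes> t) = \<one>"
  shows "\<exists>s\<in>T. s \<otimes> g \<otimes> inv s = g \<otimes> t"
proof -
  have tc: "t \<in> carrier G" using subgroup.mem_carrier[OF T(1) t] .
  obtain j where j: "card T = Suc (2*j)" using T(3) by (metis oddE Suc_eq_plus1 add.commute)
  define s where "s = t [^] j"
  have sT: "s \<in> T" unfolding s_def using subgroup_nat_pow_closed[OF T(1) t] .
  have sc: "s \<in> carrier G" using subgroup.mem_carrier[OF T(1) sT] .
  have "t [^] (2*j) \<otimes> t = \<one>" using subgroup_pow_card_eq_one[OF T(1,2) t] j by simp
  hence ss: "s \<otimes> s = inv t" unfolding s_def using tc
    by (metis inv_equality mult_2 nat_pow_closed nat_pow_mult)
  have gtg: "g \<otimes> t \<otimes> g = inv t"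
    using gt g tc by (metis inv_equality m_assoc m_closed)
  have gsg: "g \<otimes> s \<otimes> g = inv s"
    unfolding s_def using invol_conj_pow[OF g tc, of j] gtg tc by (simp add: nat_pow_inv)
  have "g \<otimes> inv s = g \<otimes> (g \<otimes> s \<otimes> g)" using gsg by simp
  also have "\<dots> = s \<otimes> g" using g sc by (simp flip: m_assoc)
  finally have "g \<otimes> inv s = s \<otimes> g" .
  then have "s \<otimes> g \<otimes> inv s = (s \<otimes> s) \<otimes> g" using g sc by (simp add: m_assoc)
  also have "\<dots> = (g \<otimes> t \<otimes> g) \<otimes> g" using ss gtg by simp
  also have "\<dots> = g \<otimes> t" using g tc by (simp add: m_assoc)
  finally show ?thesis using sT by blast
qed

end

context group_hom
begin

lemma image_conjs:
  assumes "subgroup L G" "g \<in> L"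
  shows "h ` conjs G L g = conjs H (h ` L) (h g)"
proof -
  have "h (x \<otimes> g \<otimes> inv x) = h x \<otimes>\<^bsub>H\<^esub> h g \<otimes>\<^bsub>H\<^esub> inv\<^bsub>H\<^esub> h x" if "x \<in> L" for x
    using that assms subgroup.mem_carrier by fastforce
  then show ?thesis unfolding conjs_def by (auto simp: image_iff) (metis)
qed

text \<open>Conjugation by x \<in> L maps the fibre of g^L over h g bijectively onto the fibre over
  h(x g x\<inverse>), so all fibres of h on g^L have the same size.\<close>
lemma card_conjs_fibre:
  assumes L: "subgroup L G" and g: "g \<in> L" and x: "x \<in> L"
  shows "card {y \<in> conjs G L g. h y = h (x \<otimes> g \<otimes> inv x)} = card {y \<in> conjs G L g. h y = h g}"
proof -
  interpret L: subgroup L G by (rule L)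
  let ?S = "conjs G L g"
  have Sc: "y \<in> carrier G" if "y \<in> ?S" for y using that g unfolding conjs_def by auto
  have S_closed: "u \<otimes> y \<otimes> inv u \<in> ?S" if u: "u \<in> L" and y: "y \<in> ?S" for u y
  proof -
    obtain w where w: "w \<in> L" "y = w \<otimes> g \<otimes> inv w" using y unfolding conjs_def by auto
    then have "u \<otimes> y \<otimes> inv u = (u \<otimes> w) \<otimes> g \<otimes> inv (u \<otimes> w)"
      using u g by (simp add: G.conj_mult)
    then show ?thesis unfolding conjs_def using w u by auto
  qed
  have "bij_betw (\<lambda>y. x \<otimes> y \<otimes> inv x) {y \<in> ?S. h y = h g} {y \<in> ?S. h y = h (x \<otimes> g \<otimes> inv x)}"
  proof (rule bij_betw_byWitness[where f' = "\<lambda>y. inv x \<otimes> y \<otimes> x"])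
    show "\<forall>y\<in>{y \<in> ?S. h y = h g}. inv x \<otimes> (x \<otimes> y \<otimes> inv x) \<otimes> x = y"
      using Sc x by (auto simp: G.m_assoc)
    show "\<forall>y\<in>{y \<in> ?S. h y = h (x \<otimes> g \<otimes> inv x)}. x \<otimes> (inv x \<otimes> y \<otimes> x) \<otimes> inv x = y"
      using Sc x by (auto simp: G.m_assoc)
    show "(\<lambda>y. x \<otimes> y \<otimes> inv x) ` {y \<in> ?S. h y = h g} \<subseteq> {y \<in> ?S. h y = h (x \<otimes> g \<otimes> inv x)}"
      using S_closed Sc x g by auto
    show "(\<lambda>y. inv x \<otimes> y \<otimes> x) ` {y \<in> ?S. h y = h (x \<otimes> g \<otimes> inv x)} \<subseteq> {y \<in> ?S. h y = h g}"
    proof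
      fix u assume "u \<in> (\<lambda>y. inv x \<otimes> y \<otimes> x) ` {y \<in> ?S. h y = h (x \<otimes> g \<otimes> inv x)}"
      then obtain y where y: "y \<in> ?S" "h y = h (x \<otimes> g \<otimes> inv x)" and u: "u = inv x \<otimes> y \<otimes> x"
        by auto
      have "inv x \<otimes> y \<otimes> inv (inv x) \<in> ?S" using S_closed x y by blast
      then have "inv x \<otimes> y \<otimes> x \<in> ?S" using x by simp
      moreover have "h (inv x \<otimes> y \<otimes> x) = h g"
        using y x Sc g by (auto simp: H.m_assoc)
      ultimately show "u \<in> {y \<in> ?S. h y = h g}" using u by blast
    qed
  qed
  then show ?thesis by (simp add: bij_betw_same_card)
qed

lemma card_conjs_by_fibre:
  assumes L: "subgroup L G" "finite L" and g: "g \<in> L"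
  shows "card (conjs G L g) = card (conjs H (h ` L) (h g)) * card {y \<in> conjs G L g. h y = h g}"
proof -
  have "card (conjs G L g) = card (h ` conjs G L g) * card {y \<in> conjs G L g. h y = h g}"
  proof (rule card_eq_card_image_mult)
    show "finite (conjs G L g)" using L(2) by (simp add: conjs_def)
    fix z assume "z \<in> h ` conjs G L g"
    then obtain x where "x \<in> L" "z = h (x \<otimes> g \<otimes> inv x)" unfolding conjs_def by auto
    then show "card {y \<in> conjs G L g. h y = z} = card {y \<in> conjs G L g. h y = h g}"
      using card_conjs_fibre[OF L(1) g] by simp
  qed
  then show ?thesis using image_conjs[OF L(1) g] by simp
qed

text \<open>If the part T = L \<inter> ker h of the kernel inside L has odd order, then the fibre of g^L
  over h g is exactly g^T, for an involution g: each y \<in> g^L in that fibre is g t with t \<in> T,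
  and y is again an involution.\<close>
lemma conjs_fibre_odd_kernel:
  assumes L: "subgroup L G" "finite L"
    and odd: "odd (card (L \<inter> kernel G H h))"
    and g: "g \<in> L" "g \<otimes> g = \<one>"
  shows "{y \<in> conjs G L g. h y = h g} = conjs G (L \<inter> kernel G H h) g"
proof
  interpret L: subgroup L G by (rule L(1))
  let ?T = "L \<inter> kernel G H h"
  have gc: "g \<in> carrier G" using g by auto
  show "conjs G ?T g \<subseteq> {y \<in> conjs G L g. h y = h g}"
    using gc by (auto simp: conjs_def kernel_def)
  show "{y \<in> conjs G L g. h y = h g} \<subseteq> conjs G ?T g"
  proof clarify
    fix y assume y: "y \<in> conjs G L g" "h y = h g"
    then obtain x where x: "x \<in> L" "y = x \<otimes> g \<otimes> inv x" unfolding conjs_def by auto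
    have yc: "y \<in> carrier G" using x gc by simp
    have T: "subgroup ?T G" "finite ?T"
      using G.subgroups_Inter_pair[OF L(1) subgroup_kernel] L(2) by auto
    define t where "t = g \<otimes> y"
    have "h t = h (g \<otimes> g)" using y(2) gc yc by (simp add: t_def)
    then have tT: "t \<in> ?T" using g x gc by (simp add: t_def kernel_def)
    have gt: "g \<otimes> t = y" unfolding t_def using g gc yc by (simp add: G.invol_cancel)
    have "y \<otimes> y = \<one>" using x g gc by (simp add: G.m_assoc G.invol_cancel)
    then obtain s where "s \<in> ?T" "s \<otimes> g \<otimes> inv s = y"
      using G.invol_conj_in_odd_subgroup[OF T odd gc g(2) tT] gt by auto
    then show "y \<in> conjs G ?T g" unfolding conjs_def by auto
  qed
qed

lemma card_conjs_odd_kernel: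
  assumes "subgroup L G" "finite L" "odd (card (L \<inter> kernel G H h))" "g \<in> L" "g \<otimes> g = \<one>"
  shows "card (conjs G L g) = card (conjs G (L \<inter> kernel G H h) g) * card (conjs H (h ` L) (h g))"
  using card_conjs_by_fibre[OF assms(1,2,4)] conjs_fibre_odd_kernel[OF assms] by simp

end

text \<open>A p-group acting on a finite set whose size is prime to p has a fixed point, since every
  non-trivial orbit has size divisible by p.\<close>
lemma (in group_action) p_group_fixed_point:
  assumes p: "Factorial_Ring.prime p" and G: "finite (carrier G)" "card (carrier G) = p ^ a"
    and E: "finite E" "\<not> p dvd card E"
  shows "\<exists>x\<in>E. \<forall>g\<in>carrier G. \<phi> g x = x"
proof (rule ccontr)
  assume no_fixed: "\<not> ?thesis"
  have "p dvd card (orbit G \<phi> x)" if x: "x \<in> E" for x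
  proof -
    have "card (orbit G \<phi> x) * card (stabilizer G \<phi> x) = p ^ a"
      using orbit_stabilizer_theorem[OF x] G(2) by (simp add: order_def)
    then have "card (orbit G \<phi> x) dvd p ^ a" by (metis dvd_triv_left)
    then obtain i where i: "card (orbit G \<phi> x) = p ^ i"
      using divides_primepow_nat[OF p] by auto
    show ?thesis
    proof (cases i)
      case 0
      then have "orbit G \<phi> x = {x}"
        using i orbit_refl[OF x] by (metis card_1_singletonE power_0 singletonD)
      then have "\<forall>g\<in>carrier G. \<phi> g x = x" unfolding orbit_def by blast
      then show ?thesis using no_fixed x by blast
    next
      case (Suc j) then show ?thesis using i by simp
    qed
  qed
  then have "p dvd (\<Sum>orb\<in>orbits G E \<phi>. card orb)"
    by (intro dvd_sum) (auto simp: orbits_def)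
  moreover have "(\<Sum>orb\<in>orbits G E \<phi>. card orb) = (\<Sum>orb\<in>orbits G E \<phi>. \<Sum>x\<in>orb. 1)"
    by (rule sum.cong[OF refl]) (rule card_eq_sum)
  also have "\<dots> = card E"
    using disjoint_sum[OF E(1), of "\<lambda>_. 1"] by (simp only: card_eq_sum)
  ultimately show False using E(2) by simp
qed

context group
begin

lemma rcoset_action:
  assumes P: "subgroup P G" "P \<subseteq> T" and T: "subgroup T G" and Q: "subgroup Q G" "Q \<subseteq> T"
  defines "E \<equiv> {P #> t | t. t \<in> T}"
  shows "group_action (G\<lparr>carrier := Q\<rparr>) E (\<lambda>q. \<lambda>C\<in>E. C #> inv q)"
proof -
  interpret T: subgroup T G by (rule T)
  interpret Q: subgroup Q G by (rule Q(1))
  interpret Q': group "G\<lparr>carrier := Q\<rparr>" by (rule Q.subgroup_is_group[OF is_group])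
  have Ec: "C \<subseteq> carrier G" if "C \<in> E" for C
    using that subgroup.subset[OF P(1)] unfolding E_def r_coset_def by auto
  have E_closed: "C #> q \<in> E" if C: "C \<in> E" and q: "q \<in> Q" for C q
  proof -
    obtain t where t: "t \<in> T" "C = P #> t" using C unfolding E_def by auto
    then have "C #> q = P #> (t \<otimes> q)"
      using q Q(2) subgroup.subset[OF P(1)] by (auto simp: coset_mult_assoc)
    moreover have "t \<otimes> q \<in> T" using t q Q(2) by auto
    ultimately show ?thesis unfolding E_def by blast
  qed
  have coset_cancel: "C #> inv q #> q = C" if "C \<in> E" "q \<in> Q" for C q
    using that Ec by (simp add: coset_mult_assoc coset_mult_one)
  have Bij: "(\<lambda>C\<in>E. C #> inv q) \<in> Bij E" if q: "q \<in> Q" for q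
  proof -
    have "bij_betw (\<lambda>C\<in>E. C #> inv q) E E"
    proof (rule bij_betw_byWitness[where f' = "\<lambda>C. C #> q"])
      show "\<forall>C\<in>E. (\<lambda>C\<in>E. C #> inv q) C #> q = C" using coset_cancel q by simp
      show "\<forall>C\<in>E. (\<lambda>C\<in>E. C #> inv q) (C #> q) = C"
        using coset_cancel[of _ "inv q"] E_closed q by simp
      show "(\<lambda>C\<in>E. C #> inv q) ` E \<subseteq> E" using E_closed q by auto
      show "(\<lambda>C. C #> q) ` E \<subseteq> E" using E_closed q by auto
    qed
    then show ?thesis unfolding Bij_def by simp
  qed
  have hom: "(\<lambda>C\<in>E. C #> inv (q1 \<otimes> q2)) =
      compose E (\<lambda>C\<in>E. C #> inv q1) (\<lambda>C\<in>E. C #> inv q2)" if "q1 \<in> Q" "q2 \<in> Q" for q1 q2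
    using that E_closed Ec by (auto simp: compose_def inv_mult_group coset_mult_assoc fun_eq_iff)
  show ?thesis
    unfolding group_action_def group_hom_def group_hom_axioms_def
    using Q'.is_group group_BijGroup Bij hom by (auto intro!: homI simp: BijGroup_def)
qed

lemma sylow_rcosets_prime_to_p:
  assumes p: "Factorial_Ring.prime p" and T: "subgroup T G" "finite T" and P: "is_sylow G p T P"
  shows "finite {P #> t | t. t \<in> T}" "\<not> p dvd card {P #> t | t. t \<in> T}"
proof -
  have P': "subgroup P G" "P \<subseteq> T" "card P = p ^ multiplicity p (card T)"
    using P unfolding is_sylow_def by auto
  interpret T': group "G\<lparr>carrier := T\<rparr>" by (rule subgroup.subgroup_is_group[OF T(1) is_group])
  let ?E = "{P #> t | t. t \<in> T}"
  have "rcosets\<^bsub>G\<lparr>carrier := T\<rparr>\<^esub> P = ?E"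
    unfolding RCOSETS_def r_coset_def by auto
  then have cardE: "card ?E * card P = card T"
    using T'.lagrange[OF subgroup_incl[OF P'(1) T(1) P'(2)]] by (simp add: order_def)
  have "card T \<noteq> 0" using T subgroup.one_closed[OF T(1)] by auto
  then obtain y where y: "card T = p ^ multiplicity p (card T) * y" "\<not> p dvd y"
    using multiplicity_decompose'[of "card T" p] p by (auto simp: prime_nat_iff)
  have "p ^ multiplicity p (card T) * card ?E = p ^ multiplicity p (card T) * y"
    using cardE P'(3) y(1) by (simp add: mult.commute)
  then show "\<not> p dvd card ?E" using y(2) p by (simp add: prime_gt_0_nat)
  have "?E \<subseteq> Pow T"
    using P'(2) T(1) by (auto simp: r_coset_def subgroup.m_closed)
  then show "finite ?E" using T(2) by (simp add: finite_subset)
qed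

lemma fixed_rcoset_conj_mem:
  assumes P: "subgroup P G" and t: "t \<in> carrier G" and q: "q \<in> carrier G"
    and fixed: "P #> t #> inv q = P #> t"
  shows "t \<otimes> q \<otimes> inv t \<in> P"
proof -
  have "\<one> \<otimes> t \<in> P #> t"
    unfolding r_coset_def using subgroup.one_closed[OF P] by blast
  then have "t \<in> P #> t" using t by simp
  then have "t \<otimes> inv q \<in> P #> t #> inv q" unfolding r_coset_def by blast
  then obtain p where p: "p \<in> P" "t \<otimes> inv q = p \<otimes> t"
    using fixed unfolding r_coset_def by auto
  have pc: "p \<in> carrier G" using subgroup.mem_carrier[OF P p(1)] .
  have "inv (t \<otimes> q \<otimes> inv t) = (t \<otimes> inv q) \<otimes> inv t"
    using t q by (simp add: inv_mult_group m_assoc)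
  also have "\<dots> = p" using p(2) pc t by (simp add: m_assoc)
  finally have "t \<otimes> q \<otimes> inv t = inv p"
    using inv_inv[of "t \<otimes> q \<otimes> inv t"] t q by simp
  then show ?thesis using subgroup.m_inv_closed[OF P p(1)] by simp
qed

text \<open>Acting on the right cosets of P in T,
  whose number is prime to p, the p-group Q fixes some coset P t; then t Q t\<inverse> \<subseteq> P.\<close>
lemma sylow_conj_p_subgroup:
  assumes p: "Factorial_Ring.prime p" and T: "subgroup T G" "finite T"
    and P: "is_sylow G p T P"
    and Q: "subgroup Q G" "Q \<subseteq> T" "card Q = p ^ a"
  shows "\<exists>t\<in>T. \<forall>q\<in>Q. t \<otimes> q \<otimes> inv t \<in> P"
proof -
  have P': "subgroup P G" "P \<subseteq> T" using P unfolding is_sylow_def by auto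
  define E where "E = {P #> t | t. t \<in> T}"
  interpret A: group_action "G\<lparr>carrier := Q\<rparr>" E "\<lambda>q. \<lambda>C\<in>E. C #> inv q"
    unfolding E_def by (rule rcoset_action[OF P' T(1) Q(1,2)])
  have "finite (carrier (G\<lparr>carrier := Q\<rparr>))" "card (carrier (G\<lparr>carrier := Q\<rparr>)) = p ^ a"
    using Q(2,3) T(2) finite_subset by auto
  then obtain C where C: "C \<in> E" "\<forall>q\<in>Q. C #> inv q = C"
    using A.p_group_fixed_point[OF p _ _ sylow_rcosets_prime_to_p[OF p T P, folded E_def]] by force
  obtain t where t: "t \<in> T" "C = P #> t" using C(1) unfolding E_def by auto
  have "t \<otimes> q \<otimes> inv t \<in> P" if "q \<in> Q" for q
    using fixed_rcoset_conj_mem[OF P'(1)] C(2) t that subgroup.mem_carrier[OF T(1)]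
      subgroup.mem_carrier[OF Q(1)] by blast
  then show ?thesis using t by blast
qed

lemma conj_group_hom:
  assumes "x \<in> carrier G"
  shows "group_hom G G (\<lambda>p. x \<otimes> p \<otimes> inv x)"
proof (rule group_hom.intro[OF is_group is_group], unfold_locales, rule homI)
  show "x \<otimes> p \<otimes> inv x \<in> carrier G" if "p \<in> carrier G" for p using that assms by simp
  show "x \<otimes> (p \<otimes> q) \<otimes> inv x = x \<otimes> p \<otimes> inv x \<otimes> (x \<otimes> q \<otimes> inv x)"
    if "p \<in> carrier G" "q \<in> carrier G" for p q using that assms by (simp add: m_assoc)
qed

lemma card_conj_image:
  assumes "P \<subseteq> carrier G" "x \<in> carrier G"
  shows "card ((\<lambda>p. x \<otimes> p \<otimes> inv x) ` P) = card P"
proof (rule card_image, rule inj_onI)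
  fix p q assume "p \<in> P" "q \<in> P" "x \<otimes> p \<otimes> inv x = x \<otimes> q \<otimes> inv x"
  then show "p = q" using assms conjugation_is_inj[of x p q] by auto
qed

lemma normalises_conj_mem_iff:
  assumes "(\<lambda>p. w \<otimes> p \<otimes> inv w) ` P = P" "P \<subseteq> carrier G" "w \<in> carrier G" "z \<in> carrier G"
  shows "w \<otimes> z \<otimes> inv w \<in> P \<longleftrightarrow> z \<in> P"
proof
  assume "w \<otimes> z \<otimes> inv w \<in> P"
  then obtain p where "p \<in> P" "w \<otimes> z \<otimes> inv w = w \<otimes> p \<otimes> inv w"
    using assms(1) by blast
  then show "z \<in> P" using assms(2-4) conjugation_is_inj[of w z p] by auto
next
  assume "z \<in> P"
  then show "w \<otimes> z \<otimes> inv w \<in> P" using assms(1) by blast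
qed

text \<open>Frattini argument: if T is normal in L and P is a Sylow p-subgroup of T, then every coset
  T x (x \<in> L) contains an element normalising P, because x P x\<inverse> is another Sylow
  p-subgroup of T and hence T-conjugate to P.\<close>
lemma frattini_argument:
  assumes p: "Factorial_Ring.prime p"
    and L: "subgroup L G" "finite L"
    and T: "subgroup T G" "T \<subseteq> L" "\<And>x t. x \<in> L \<Longrightarrow> t \<in> T \<Longrightarrow> x \<otimes> t \<otimes> inv x \<in> T"
    and P: "is_sylow G p T P"
    and x: "x \<in> L"
  shows "\<exists>t\<in>T. (\<lambda>p. (t \<otimes> x) \<otimes> p \<otimes> inv (t \<otimes> x)) ` P = P"
proof -
  have P': "subgroup P G" "P \<subseteq> T" "card P = p ^ multiplicity p (card T)"
    using P unfolding is_sylow_def by auto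
  have Pc: "P \<subseteq> carrier G" using subgroup.subset[OF P'(1)] .
  have xc: "x \<in> carrier G" using subgroup.mem_carrier[OF L(1) x] .
  let ?Q = "(\<lambda>p. x \<otimes> p \<otimes> inv x) ` P"
  have Q: "subgroup ?Q G" "?Q \<subseteq> T" "card ?Q = p ^ multiplicity p (card T)"
    using group_hom.subgroup_img_is_subgroup[OF conj_group_hom[OF xc] P'(1)]
      T(3)[OF x] P'(2,3) card_conj_image[OF Pc xc] by auto
  obtain t where t: "t \<in> T" "\<forall>q\<in>?Q. t \<otimes> q \<otimes> inv t \<in> P"
    using sylow_conj_p_subgroup[OF p T(1) finite_subset[OF T(2) L(2)] P Q] by blast
  have tc: "t \<in> carrier G" using subgroup.mem_carrier[OF T(1) t(1)] .
  have "(\<lambda>p. (t \<otimes> x) \<otimes> p \<otimes> inv (t \<otimes> x)) ` P = (\<lambda>q. t \<otimes> q \<otimes> inv t) ` ?Q"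
    unfolding image_image by (rule image_cong[OF refl]) (use Pc tc xc in \<open>auto simp: conj_mult\<close>)
  also have "\<dots> \<subseteq> P" using t(2) by auto
  finally have sub: "(\<lambda>p. (t \<otimes> x) \<otimes> p \<otimes> inv (t \<otimes> x)) ` P \<subseteq> P" .
  have "(\<lambda>p. (t \<otimes> x) \<otimes> p \<otimes> inv (t \<otimes> x)) ` P = P"
  proof (rule card_subset_eq[OF _ sub])
    show "finite P" using finite_subset[OF P'(2) finite_subset[OF T(2) L(2)]] .
    show "card ((\<lambda>p. (t \<otimes> x) \<otimes> p \<otimes> inv (t \<otimes> x)) ` P) = card P"
      using card_conj_image[OF Pc] tc xc by simp
  qed
  then show ?thesis using t(1) by blast
qed

lemma card_by_cosets:
  assumes L: "subgroup L G" "finite L" and T: "subgroup T G" "T \<subseteq> L"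
    and A: "A \<subseteq> L" and m: "\<And>x. x \<in> L \<Longrightarrow> card (A \<inter> (T #> x)) = m"
  shows "card A * card T = card L * m"
proof -
  interpret L': group "G\<lparr>carrier := L\<rparr>" by (rule subgroup.subgroup_is_group[OF L(1) is_group])
  have TL: "subgroup T (G\<lparr>carrier := L\<rparr>)" using subgroup_incl[OF T(1) L(1) T(2)] .
  define R where "R = rcosets\<^bsub>G\<lparr>carrier := L\<rparr>\<^esub> T"
  have R_eq: "R = {T #> x | x. x \<in> L}"
    unfolding R_def RCOSETS_def r_coset_def by auto
  have cardR: "card R * card T = card L" using L'.lagrange[OF TL] by (simp add: R_def order_def)
  have UR: "\<Union>R = L" using L'.rcosets_part_G[OF TL] by (simp add: R_def)
  have disj: "pairwise disjnt R" using L'.rcos_disjoint[OF TL] by (simp add: R_def)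
  have finR: "finite R" using UR L(2) by (metis finite_UnionD)
  have "card A = card (\<Union>c\<in>R. A \<inter> c)"
    using A UR by (intro arg_cong[where f = card]) auto
  also have "\<dots> = (\<Sum>c\<in>R. card (A \<inter> c))"
  proof (rule card_UN_disjoint[OF finR])
    show "\<forall>c\<in>R. finite (A \<inter> c)" using UR L(2) by (auto intro: finite_subset)
    show "\<forall>c\<in>R. \<forall>c'\<in>R. c \<noteq> c' \<longrightarrow> A \<inter> c \<inter> (A \<inter> c') = {}"
      using disj unfolding pairwise_def disjnt_def by auto
  qed
  also have "\<dots> = (\<Sum>c\<in>R. m)" using m by (intro sum.cong) (auto simp: R_eq)
  also have "\<dots> = card R * m" by simp
  finally show ?thesis using cardR by (metis mult.assoc mult.commute)
qed

text \<open>If w = t x (t \<in> T) normalises P, left multiplication by w maps the elements of T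
  conjugating g into P bijectively onto the elements of the coset T x with that property.\<close>
lemma card_conj_preimage_coset:
  assumes L: "subgroup L G"
    and T: "subgroup T G" "T \<subseteq> L" "\<And>x t. x \<in> L \<Longrightarrow> t \<in> T \<Longrightarrow> x \<otimes> t \<otimes> inv x \<in> T"
    and P: "P \<subseteq> carrier G" and g: "g \<in> carrier G" and x: "x \<in> L" and t: "t \<in> T"
    and norm: "(\<lambda>p. (t \<otimes> x) \<otimes> p \<otimes> inv (t \<otimes> x)) ` P = P"
  shows "card ({y\<in>L. y \<otimes> g \<otimes> inv y \<in> P} \<inter> (T #> x)) = card {y\<in>T. y \<otimes> g \<otimes> inv y \<in> P}"
proof -
  interpret L: subgroup L G by (rule L)
  interpret T: subgroup T G by (rule T(1))
  define w where "w = t \<otimes> x"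
  have xc: "x \<in> carrier G" and tc: "t \<in> carrier G" using x t T(2) by auto
  have wc: "w \<in> carrier G" and wL: "w \<in> L" using x t T(2) by (auto simp: w_def)
  have Lc: "y \<in> L \<Longrightarrow> y \<in> carrier G" for y by auto
  have conj_w: "(w \<otimes> y) \<otimes> g \<otimes> inv (w \<otimes> y) \<in> P \<longleftrightarrow> y \<otimes> g \<otimes> inv y \<in> P"
    if "y \<in> carrier G" for y
    using normalises_conj_mem_iff[OF norm[folded w_def] P wc, of "y \<otimes> g \<otimes> inv y"] that wc g
    by (simp add: conj_mult)
  have "bij_betw (\<lambda>y. w \<otimes> y) {y\<in>T. y \<otimes> g \<otimes> inv y \<in> P} ({y\<in>L. y \<otimes> g \<otimes> inv y \<in> P} \<inter> (T #> x))"
  proof (rule bij_betw_byWitness[where f' = "\<lambda>y. inv w \<otimes> y"])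
    show "\<forall>y\<in>{y\<in>T. y \<otimes> g \<otimes> inv y \<in> P}. inv w \<otimes> (w \<otimes> y) = y" using wc by auto
    show "\<forall>y\<in>{y\<in>L. y \<otimes> g \<otimes> inv y \<in> P} \<inter> (T #> x). w \<otimes> (inv w \<otimes> y) = y"
      using wc Lc by auto
    show "(\<lambda>y. w \<otimes> y) ` {y\<in>T. y \<otimes> g \<otimes> inv y \<in> P} \<subseteq> {y\<in>L. y \<otimes> g \<otimes> inv y \<in> P} \<inter> (T #> x)"
    proof
      fix z assume "z \<in> (\<lambda>y. w \<otimes> y) ` {y\<in>T. y \<otimes> g \<otimes> inv y \<in> P}"
      then obtain y where y: "y \<in> T" "y \<otimes> g \<otimes> inv y \<in> P" and z: "z = w \<otimes> y" by auto
      have yc: "y \<in> carrier G" using y(1) by auto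
      have "w \<otimes> y = (t \<otimes> (x \<otimes> y \<otimes> inv x)) \<otimes> x" using tc xc yc by (simp add: w_def m_assoc)
      moreover have "t \<otimes> (x \<otimes> y \<otimes> inv x) \<in> T" using T(3)[OF x y(1)] t by simp
      ultimately have "w \<otimes> y \<in> T #> x" unfolding r_coset_def by blast
      then show "z \<in> {y\<in>L. y \<otimes> g \<otimes> inv y \<in> P} \<inter> (T #> x)"
        using wL y T(2) conj_w[OF yc] z by auto
    qed
    show "(\<lambda>y. inv w \<otimes> y) ` ({y\<in>L. y \<otimes> g \<otimes> inv y \<in> P} \<inter> (T #> x)) \<subseteq> {y\<in>T. y \<otimes> g \<otimes> inv y \<in> P}"
    proof
      fix z assume "z \<in> (\<lambda>y. inv w \<otimes> y) ` ({y\<in>L. y \<otimes> g \<otimes> inv y \<in> P} \<inter> (T #> x))"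
      then obtain y where y: "y \<in> L" "y \<otimes> g \<otimes> inv y \<in> P" "y \<in> T #> x" and z: "z = inv w \<otimes> y"
        by auto
      then obtain s where s: "s \<in> T" "y = s \<otimes> x" unfolding r_coset_def by auto
      have sc: "s \<in> carrier G" using s(1) by auto
      have "inv w \<otimes> y = inv x \<otimes> (inv t \<otimes> s) \<otimes> inv (inv x)"
        using tc xc sc by (simp add: w_def s(2) inv_mult_group m_assoc)
      moreover have "inv t \<otimes> s \<in> T" using t s(1) by simp
      ultimately have "inv w \<otimes> y \<in> T" using T(3)[of "inv x"] x by simp
      moreover have "(inv w \<otimes> y) \<otimes> g \<otimes> inv (inv w \<otimes> y) \<in> P"
        using conj_w[of "inv w \<otimes> y"] y wc by simp
      ultimately show "z \<in> {y\<in>T. y \<otimes> g \<otimes> inv y \<in> P}" using z by auto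
    qed
  qed
  then show ?thesis by (simp add: bij_betw_same_card)
qed

text \<open>Both sides arise from
  counting the elements of L conjugating g into P, coset by coset of T.\<close>
lemma card_conjs_normalised_ratio:
  assumes L: "subgroup L G" "finite L"
    and T: "subgroup T G" "T \<subseteq> L" "\<And>x t. x \<in> L \<Longrightarrow> t \<in> T \<Longrightarrow> x \<otimes> t \<otimes> inv x \<in> T"
    and P: "P \<subseteq> carrier G"
    and norm: "\<And>x. x \<in> L \<Longrightarrow> \<exists>t\<in>T. (\<lambda>p. (t \<otimes> x) \<otimes> p \<otimes> inv (t \<otimes> x)) ` P = P"
    and g: "g \<in> carrier G"
  shows "card (conjs G L g) * card (conjs G T g \<inter> P) = card (conjs G T g) * card (conjs G L g \<inter> P)"
proof -
  have finT: "finite T" using finite_subset[OF T(2) L(2)] .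
  have "card {y\<in>L. y \<otimes> g \<otimes> inv y \<in> P} * card T = card L * card {y\<in>T. y \<otimes> g \<otimes> inv y \<in> P}"
  proof (rule card_by_cosets[OF L T(1,2)])
    fix x assume x: "x \<in> L"
    then obtain t where t: "t \<in> T" "(\<lambda>p. (t \<otimes> x) \<otimes> p \<otimes> inv (t \<otimes> x)) ` P = P"
      using norm by blast
    show "card ({y\<in>L. y \<otimes> g \<otimes> inv y \<in> P} \<inter> (T #> x)) = card {y\<in>T. y \<otimes> g \<otimes> inv y \<in> P}"
      using card_conj_preimage_coset[OF L(1) T P g x t] .
  qed auto
  then have "card (conjs G L g \<inter> P) * card (conjs G T g) * (card (centr G L g) * card (centr G T g))
      = card (conjs G L g) * card (conjs G T g \<inter> P) * (card (centr G L g) * card (centr G T g))"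
    unfolding card_conj_preimage[OF L g] card_conj_preimage[OF T(1) finT g]
      card_conjs_centr[OF L g] card_conjs_centr[OF T(1) finT g]
    by (simp add: algebra_simps)
  then show ?thesis
    using card_centr_pos[OF L g] card_centr_pos[OF T(1) finT g] by (simp add: mult.commute)
qed

lemma invol_conjs_meets_sylow:
  assumes T: "subgroup T G" "finite T" and P: "is_sylow G 2 T P"
    and g: "g \<in> T" "g \<otimes> g = \<one>"
  shows "conjs G T g \<inter> P \<noteq> {}"
proof -
  have gc: "g \<in> carrier G" using subgroup.mem_carrier[OF T(1) g(1)] .
  have Q: "subgroup {\<one>, g} G"
  proof
    show "x \<otimes> y \<in> {\<one>, g}" if "x \<in> {\<one>, g}" "y \<in> {\<one>, g}" for x y
      using that gc g(2) by auto
    show "inv x \<in> {\<one>, g}" if "x \<in> {\<one>, g}" for x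
      using that gc g(2) inv_equality[OF g(2) gc gc] by auto
  qed (use gc in auto)
  have "card {\<one>, g} = 2 ^ (if g = \<one> then 0 else 1)" by simp
  then obtain t where "t \<in> T" "t \<otimes> g \<otimes> inv t \<in> P"
    using sylow_conj_p_subgroup[OF two_is_prime_nat T P Q] g subgroup.one_closed[OF T(1)] by blast
  then show ?thesis unfolding conjs_def by blast
qed

end

lemma proj_to_mult:
  "i \<le> j \<Longrightarrow> proj_to j r (x \<otimes>\<^bsub>product_group {i..r} Hs\<^esub> y)
     = proj_to j r x \<otimes>\<^bsub>product_group {j..r} Hs\<^esub> proj_to j r y"
  by (auto simp: proj_to_def fun_eq_iff)

lemma proj_to_one:
  "i \<le> j \<Longrightarrow> proj_to j r \<one>\<^bsub>product_group {i..r} Hs\<^esub> = \<one>\<^bsub>product_group {j..r} Hs\<^esub>"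
  by (auto simp: proj_to_def fun_eq_iff)

lemma proj_to_carrier:
  "i \<le> j \<Longrightarrow> x \<in> carrier (product_group {i..r} Hs) \<Longrightarrow> proj_to j r x \<in> carrier (product_group {j..r} Hs)"
  by (auto simp: proj_to_def PiE_iff)

lemma proj_to_proj: "i \<le> j \<Longrightarrow> proj_to j r (proj_to i r x) = proj_to j r x"
  by (auto simp: proj_to_def fun_eq_iff)

lemma proj_to_id: "x \<in> carrier (product_group {i..r} Hs) \<Longrightarrow> proj_to i r x = x"
  by (simp add: proj_to_def PiE_def extensional_restrict)

locale subgroup_of_product =
  fixes Hs :: "nat \<Rightarrow> ('a, 'b) monoid_scheme" and r :: nat and H :: "(nat \<Rightarrow> 'a) set"
  assumes factor_group: "\<And>i. i \<in> {1..r} \<Longrightarrow> group (Hs i)"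
    and factor_finite: "\<And>i. i \<in> {1..r} \<Longrightarrow> finite (carrier (Hs i))"
    and subgroup_H: "subgroup H (product_group {1..r} Hs)"
begin

abbreviation G :: "nat \<Rightarrow> (nat \<Rightarrow> 'a) monoid" where "G i \<equiv> product_group {i..r} Hs"
abbreviation L :: "nat \<Rightarrow> (nat \<Rightarrow> 'a) set" where "L i \<equiv> Lproj H r i"
abbreviation T :: "nat \<Rightarrow> (nat \<Rightarrow> 'a) set" where "T i \<equiv> Tker Hs H r i"

lemma group_G: "1 \<le> i \<Longrightarrow> group (G i)"
  by (rule product_group) (use factor_group in auto)

lemma proj_group_hom: "1 \<le> i \<Longrightarrow> i \<le> j \<Longrightarrow> group_hom (G i) (G j) (proj_to j r)"
  unfolding group_hom_def group_hom_axioms_def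
  using group_G by (auto intro!: homI proj_to_carrier proj_to_mult)

lemma finite_H: "finite H"
proof -
  have "finite (carrier (G 1))"
    unfolding carrier_product_group by (intro finite_PiE) (auto intro: factor_finite)
  then show ?thesis using subgroup.subset[OF subgroup_H] finite_subset by auto
qed

lemma L_1: "L 1 = H"
proof -
  have "proj_to 1 r x = x" if "x \<in> H" for x
    using proj_to_id subgroup.mem_carrier[OF subgroup_H that] by blast
  then show ?thesis unfolding Lproj_def by simp
qed

lemma subgroup_L: "1 \<le> i \<Longrightarrow> subgroup (L i) (G i)"
  unfolding Lproj_def
  by (rule group_hom.subgroup_img_is_subgroup[OF proj_group_hom[OF order_refl] subgroup_H])

lemma finite_L: "finite (L i)"
  unfolding Lproj_def using finite_H by simp

lemma proj_L: "i \<le> j \<Longrightarrow> proj_to j r ` L i = L j"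
  unfolding Lproj_def image_image by (simp add: proj_to_proj)

lemma T_eq_kernel:
  assumes "1 \<le> i" "i < r"
  shows "T i = L i \<inter> kernel (G i) (G (Suc i)) (proj_to (Suc i) r)"
  using assms subgroup.subset[OF subgroup_L[OF assms(1)]] by (auto simp: Tker_def kernel_def)

lemma T_normal:
  assumes i: "1 \<le> i" "i \<le> r"
  shows "subgroup (T i) (G i)" "T i \<subseteq> L i"
    and "\<And>x t. x \<in> L i \<Longrightarrow> t \<in> T i \<Longrightarrow> x \<otimes>\<^bsub>G i\<^esub> t \<otimes>\<^bsub>G i\<^esub> inv\<^bsub>G i\<^esub> x \<in> T i"
proof -
  interpret Gi: group "G i" by (rule group_G[OF i(1)])
  interpret Li: subgroup "L i" "G i" by (rule subgroup_L[OF i(1)])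
  show "T i \<subseteq> L i" by (auto simp: Tker_def)
  have conj_L: "x \<otimes>\<^bsub>G i\<^esub> t \<otimes>\<^bsub>G i\<^esub> inv\<^bsub>G i\<^esub> x \<in> L i" if "x \<in> L i" "t \<in> L i" for x t
    using that by (intro Li.m_closed Li.m_inv_closed)
  have "subgroup (T i) (G i) \<and> (\<forall>x\<in>L i. \<forall>t\<in>T i. x \<otimes>\<^bsub>G i\<^esub> t \<otimes>\<^bsub>G i\<^esub> inv\<^bsub>G i\<^esub> x \<in> T i)"
  proof (cases "i < r")
    case True
    interpret h: group_hom "G i" "G (Suc i)" "proj_to (Suc i) r"
      by (rule proj_group_hom) (use i in auto)
    have K: "kernel (G i) (G (Suc i)) (proj_to (Suc i) r) \<lhd> G i" by (rule h.normal_kernel)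
    show ?thesis
      unfolding T_eq_kernel[OF i(1) True]
      using Gi.subgroups_Inter_pair[OF subgroup_L[OF i(1)] h.subgroup_kernel]
        normal.inv_op_closed2[OF K Li.mem_carrier] conj_L by blast
  next
    case False
    then show ?thesis using subgroup_L[OF i(1)] conj_L by (simp add: Tker_def)
  qed
  then show "subgroup (T i) (G i)"
    and "\<And>x t. x \<in> L i \<Longrightarrow> t \<in> T i \<Longrightarrow> x \<otimes>\<^bsub>G i\<^esub> t \<otimes>\<^bsub>G i\<^esub> inv\<^bsub>G i\<^esub> x \<in> T i"
    by auto
qed

lemma finite_T: "finite (T i)"
proof (rule finite_subset)
  show "T i \<subseteq> L i" by (auto simp: Tker_def)
qed (rule finite_L)

end

lemma prod_telescope:
  fixes c t :: "nat \<Rightarrow> 'a::comm_semiring_1"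
  assumes step: "\<And>i. 1 \<le> i \<Longrightarrow> i < k \<Longrightarrow> c i = t i * c (Suc i)"
    and last: "c k = t k * R" and k: "1 \<le> k"
  shows "c 1 = (\<Prod>i=1..k. t i) * R"
  using k
proof (induction rule: inc_induct)
  case base
  then show ?case using last by simp
next
  case (step j)
  then have "c j = t j * ((\<Prod>i=Suc j..k. t i) * R)" using assms(1) by simp
  also have "\<dots> = (\<Prod>i=j..k. t i) * R"
    using step.hyps by (simp add: prod.atLeast_Suc_atMost mult.assoc)
  finally show ?case .
qed

context subgroup_of_product
begin

lemma proj_invol:
  assumes i: "1 \<le> i" and g: "g \<in> H" "g \<otimes>\<^bsub>G 1\<^esub> g = \<one>\<^bsub>G 1\<^esub>"
  shows "proj_to i r g \<in> L i" "proj_to i r g \<otimes>\<^bsub>G i\<^esub> proj_to i r g = \<one>\<^bsub>G i\<^esub>"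
proof -
  show "proj_to i r g \<in> L i" using g(1) by (simp add: Lproj_def)
  have "proj_to i r (g \<otimes>\<^bsub>G 1\<^esub> g) = proj_to i r g \<otimes>\<^bsub>G i\<^esub> proj_to i r g"
    by (rule proj_to_mult) (rule i)
  then show "proj_to i r g \<otimes>\<^bsub>G i\<^esub> proj_to i r g = \<one>\<^bsub>G i\<^esub>"
    using g(2) proj_to_one[OF i] by metis
qed

lemma proj_in_T:
  assumes k: "1 \<le> k" "k \<le> r" and g: "g \<in> H"
    and triv: "k < r \<Longrightarrow> proj_to (k + 1) r g = \<one>\<^bsub>G (k + 1)\<^esub>"
  shows "proj_to k r g \<in> T k"
proof (cases "k < r")
  case True
  have "proj_to (Suc k) r (proj_to k r g) = proj_to (Suc k) r g" by (rule proj_to_proj) simp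
  also have "\<dots> = \<one>\<^bsub>G (Suc k)\<^esub>" using triv True by simp
  finally show ?thesis using True g by (simp add: Tker_def Lproj_def)
qed (use g in \<open>simp add: Tker_def Lproj_def\<close>)

lemma index_centr_eq_card_conjs_proj:
  assumes i: "1 \<le> i" and K: "subgroup K (G i)" "K \<subseteq> L i" and g: "g \<in> H"
  shows "real (card K) / real (card (centr (G i) K (proj_to i r g)))
    = real (card (conjs (G i) K (proj_to i r g)))"
proof (rule group.index_centr_eq_card_conjs[OF group_G[OF i] K(1)])
  show "finite K" using finite_subset[OF K(2) finite_L] .
  show "proj_to i r g \<in> carrier (G i)"
    using subgroup.subset[OF subgroup_L[OF i]] g by (auto simp: Lproj_def)
qed

lemma card_conjs_odd_step:
  assumes i: "1 \<le> i" "i < r" and odd: "odd (card (T i))"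
    and g: "g \<in> H" "g \<otimes>\<^bsub>G 1\<^esub> g = \<one>\<^bsub>G 1\<^esub>"
  shows "card (conjs (G i) (L i) (proj_to i r g))
    = card (conjs (G i) (T i) (proj_to i r g)) * card (conjs (G (Suc i)) (L (Suc i)) (proj_to (Suc i) r g))"
proof -
  interpret h: group_hom "G i" "G (Suc i)" "proj_to (Suc i) r"
    by (rule proj_group_hom) (use i in auto)
  have "proj_to (Suc i) r ` L i = L (Suc i)" by (rule proj_L) simp
  moreover have "proj_to (Suc i) r (proj_to i r g) = proj_to (Suc i) r g" by (rule proj_to_proj) simp
  ultimately show ?thesis
    using h.card_conjs_odd_kernel[OF subgroup_L[OF i(1)] finite_L _ proj_invol[OF i(1) g]]
      odd T_eq_kernel[OF i] by simp
qed

lemma card_conjs_sylow_step: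
  assumes k: "1 \<le> k" "k \<le> r" and g: "g \<in> H" "g \<otimes>\<^bsub>G 1\<^esub> g = \<one>\<^bsub>G 1\<^esub>"
    and gT: "proj_to k r g \<in> T k" and P: "is_sylow (G k) 2 (T k) P"
  shows "real (card (conjs (G k) (L k) (proj_to k r g)))
    = real (card (conjs (G k) (T k) (proj_to k r g)))
      * (real (card (conjs (G k) (L k) (proj_to k r g) \<inter> P))
         / real (card (conjs (G k) (T k) (proj_to k r g) \<inter> P)))"
proof -
  interpret Gk: group "G k" by (rule group_G[OF k(1)])
  note L = subgroup_L[OF k(1)] finite_L and T = T_normal[OF k]
  have Pc: "P \<subseteq> carrier (G k)"
    using P subgroup.subset unfolding is_sylow_def by blast
  have gc: "proj_to k r g \<in> carrier (G k)"
    using subgroup.mem_carrier[OF L(1) proj_invol(1)[OF k(1) g]] .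
  have "card (conjs (G k) (L k) (proj_to k r g)) * card (conjs (G k) (T k) (proj_to k r g) \<inter> P)
      = card (conjs (G k) (T k) (proj_to k r g)) * card (conjs (G k) (L k) (proj_to k r g) \<inter> P)"
    using Gk.card_conjs_normalised_ratio[OF L T Pc _ gc]
      Gk.frattini_argument[OF two_is_prime_nat L T P] by blast
  moreover have "card (conjs (G k) (T k) (proj_to k r g) \<inter> P) > 0"
  proof -
    have "finite (conjs (G k) (T k) (proj_to k r g) \<inter> P)"
      using finite_T[of k] by (simp add: conjs_def)
    then show ?thesis
      using Gk.invol_conjs_meets_sylow[OF T(1) finite_T P gT proj_invol(2)[OF k(1) g]]
      by (simp add: card_gt_0_iff)
  qed
  ultimately show ?thesis by (simp add: field_simps flip: of_nat_mult)
qed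

end

theorem lemma2p3:
  fixes Hs :: "nat \<Rightarrow> ('a,'b) monoid_scheme"
    and r k :: nat
    and H :: "(nat \<Rightarrow> 'a) set"
    and g :: "nat \<Rightarrow> 'a"
    and P :: "(nat \<Rightarrow> 'a) set"
  assumes r: "1 \<le> r"
    and grps: "\<And>i. i \<in> {1..r} \<Longrightarrow> group (Hs i)"
    and fin: "\<And>i. i \<in> {1..r} \<Longrightarrow> finite (carrier (Hs i))"
    and sub: "subgroup H (product_group {1..r} Hs)"
    and gH: "g \<in> H"
    and inv1: "g \<noteq> \<one>\<^bsub>product_group {1..r} Hs\<^esub>"
    and inv2: "g \<otimes>\<^bsub>product_group {1..r} Hs\<^esub> g = \<one>\<^bsub>product_group {1..r} Hs\<^esub>"
    and k: "1 \<le> k" "k \<le> r"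
    and odd: "\<And>i. 1 \<le> i \<Longrightarrow> i < k \<Longrightarrow> odd (card (Tker Hs H r i))"
    and even: "even (card (Tker Hs H r k))"
    and gk: "k < r \<Longrightarrow> proj_to (k+1) r g = \<one>\<^bsub>product_group {k+1..r} Hs\<^esub>"
    and syl: "is_sylow (product_group {k..r} Hs) 2 (Tker Hs H r k) P"
  shows "real (card H) / real (card (centr (product_group {1..r} Hs) H g)) =
     (\<Prod>i=1..k. real (card (Tker Hs H r i))
        / real (card (centr (product_group {i..r} Hs) (Tker Hs H r i) (proj_to i r g))))
     * (real (card (conjs (product_group {k..r} Hs) (Lproj H r k) (proj_to k r g) \<inter> P))
        / real (card (conjs (product_group {k..r} Hs) (Tker Hs H r k) (proj_to k r g) \<inter> P)))"
proof -
  interpret subgroup_of_product Hs r H by (rule subgroup_of_product.intro[OF grps fin sub])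
  define c where "c i = real (card (conjs (G i) (L i) (proj_to i r g)))" for i
  define t where "t i = real (card (conjs (G i) (T i) (proj_to i r g)))" for i
  have "c 1 = (\<Prod>i=1..k. t i)
      * (real (card (conjs (G k) (L k) (proj_to k r g) \<inter> P))
         / real (card (conjs (G k) (T k) (proj_to k r g) \<inter> P)))" (is "_ = _ * ?ratio")
  proof (rule prod_telescope[OF _ _ k(1)])
    show "c i = t i * c (Suc i)" if "1 \<le> i" "i < k" for i
      using card_conjs_odd_step[of i g] that k odd gH inv2 by (simp add: c_def t_def)
    show "c k = t k * ?ratio"
      using card_conjs_sylow_step[OF k gH inv2 proj_in_T[OF k gH gk] syl] by (simp add: c_def t_def)
  qed
  moreover have "real (card H) / real (card (centr (G 1) H g)) = c 1"
    using index_centr_eq_card_conjs_proj[OF order_refl subgroup_H _ gH] L_1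
      proj_to_id[OF subgroup.mem_carrier[OF subgroup_H gH]] by (simp add: c_def)
  moreover have "real (card (T i)) / real (card (centr (G i) (T i) (proj_to i r g))) = t i"
    if "i \<in> {1..k}" for i
    using index_centr_eq_card_conjs_proj[of i "T i"] T_normal[of i] that k gH by (simp add: t_def)
  ultimately show ?thesis by simp
qed

end
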